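(* Let $i\ge0$, let $\mathbf{e}_i$ be a 1-dimensional error pattern at level $i$, let $P_i$ be its number of paths, and let $\mathbf{e}_{i+1}$ be a 1-dimensional preimage of $\mathbf{e}_i$. Then $\mathrm{wt}(\mathbf{e}_{i+1})\ge\mathrm{wt}(\mathbf{e}_i)+P_i$.
   Context: 1-dimensional model. For $j\ge0$, the line at level $j$ is the cycle with vertex set $\mathbb{Z}/2^j\mathbb{Z}$ and edges $\{v,v+1\}$, $v\in\mathbb{Z}/2^j\mathbb{Z}$ (for $j=0$, one vertex with a loop edge). A 1-dimensional error pattern at level $j$ is a subset of these edges; $\mathrm{wt}$ is its number of edges; its syndrome is the set of vertices incident to an odd number of its edges. The number of paths of a pattern is the number of connected components (maximal runs of consecutive edges) of the pattern, except that it is $0$ when the pattern is the whole cycle. At level $j+1$, block $m\in\mathbb{Z}/2^j\mathbb{Z}$ consists of the left edge $\{2m,2m+1\}$ and right edge $\{2m+1,2m+2\}$ and corresponds to the edge $\{m,m+1\}$ at level $j$. One reduction stage applied to a pattern $\mathbf{f}$ at level $j+1$ with syndrome $S$: (a) for every block, if $2m+1,2m+2\in S$, flip (add mod 2) the right edge and remove both from $S$; (b) then for every block, if $2m+1$ is still in $S$, flip the left edge. In the resulting pattern $\mathbf{f}'$ each block contains $0$ or $2$ edges; the image of $\mathbf{f}$ is the pattern at level $j$ containing $\{m,m+1\}$ iff block $m\subseteq\mathbf{f}'$. A pattern $\mathbf{f}$ at level $j+1$ is a 1-dimensional preimage of $\mathbf{g}$ at level $j$ if the image of $\mathbf{f}$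 is $\mathbf{g}$. *)

theory Defs
  imports Main
begin

text \<open>Level j: cycle on vertices Z/2^j (represented by 0..<2^j). The edge {v, v+1}
  is represented by its index v in 0..<2^j. An error pattern is a set of edge indices.\<close>

definition edges :: "nat \<Rightarrow> nat set" where
  "edges j = {0..<2^j}"

definition vertices :: "nat \<Rightarrow> nat set" where
  "vertices j = {0..<2^j}"

definition incident :: "nat \<Rightarrow> nat \<Rightarrow> nat \<Rightarrow> bool" where
  "incident j u v \<longleftrightarrow> u = v \<or> u = (v + 1) mod 2^j"

definition wt :: "nat set \<Rightarrow> nat" where
  "wt f = card f"

definition syndrome :: "nat \<Rightarrow> nat set \<Rightarrow> nat set" where
  "syndrome j f = {u \<in> vertices j. odd (card {v \<in> f. incident j u v})}"

text \<open>The whole cycle is not a run, so the number of paths of the whole cycle is 0.\<close>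
definition maximal_runs :: "nat \<Rightarrow> nat set \<Rightarrow> nat set set" where
  "maximal_runs j g = {R. \<exists>s l. s < 2^j \<and> 1 \<le> l \<and> l < 2^j
      \<and> R = {(s + k) mod 2^j | k. k < l} \<and> R \<subseteq> g
      \<and> (s + 2^j - 1) mod 2^j \<notin> g \<and> (s + l) mod 2^j \<notin> g}"

definition num_paths :: "nat \<Rightarrow> nat set \<Rightarrow> nat" where
  "num_paths j g = card (maximal_runs j g)"

text \<open>One reduction stage from level j+1 to level j. Block m (m < 2^j) has left edge 2m
  (= {2m,2m+1}) and right edge 2m+1 (= {2m+1,2m+2}).\<close>
definition stageA_blocks :: "nat \<Rightarrow> nat set \<Rightarrow> nat set" where
  "stageA_blocks j f = {m \<in> {0..<2^j}. 2*m+1 \<in> syndrome (Suc j) f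
       \<and> (2*m+2) mod 2^(Suc j) \<in> syndrome (Suc j) f}"

definition syndrome_after_A :: "nat \<Rightarrow> nat set \<Rightarrow> nat set" where
  "syndrome_after_A j f = syndrome (Suc j) f
     - (\<Union>m\<in>stageA_blocks j f. {2*m+1, (2*m+2) mod 2^(Suc j)})"

definition pattern_after_A :: "nat \<Rightarrow> nat set \<Rightarrow> nat set" where
  "pattern_after_A j f = (f - {2*m+1 | m. m \<in> stageA_blocks j f})
     \<union> ({2*m+1 | m. m \<in> stageA_blocks j f} - f)"

definition reduced_pattern :: "nat \<Rightarrow> nat set \<Rightarrow> nat set" where
  "reduced_pattern j f = (let f1 = pattern_after_A j f;
       L = {2*m | m. m < 2^j \<and> 2*m+1 \<in> syndrome_after_A j f}
     in (f1 - L) \<union> (L - f1))"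

definition image_pattern :: "nat \<Rightarrow> nat set \<Rightarrow> nat set" where
  "image_pattern j f = {m \<in> {0..<2^j}. 2*m \<in> reduced_pattern j f \<and> 2*m+1 \<in> reduced_pattern j f}"

definition is_preimage :: "nat \<Rightarrow> nat set \<Rightarrow> nat set \<Rightarrow> bool" where
  "is_preimage j f g \<longleftrightarrow> f \<subseteq> edges (Suc j) \<and> image_pattern j f = g"

end

theory Submission
  imports Defs
begin

text \<open>After one reduction stage every block holds 0 or 2 edges, and block \<open>m\<close> is full exactly
  when at least two of the three consecutive edges \<open>2m, 2m+1, 2m+2\<close> of the preimage are
  present. Charging to block \<open>m\<close> its right edge \<open>2m+1\<close> and the next left edge \<open>2m+2\<close>
  partitions the preimage, and every block of the image is charged at least one edge. For the
  first block \<open>m\<close> of a path, the block \<open>m-1\<close> is not in the image, yet it is charged the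
  edge \<open>2m\<close> whenever that edge is present, and otherwise block \<open>m\<close> alone is charged two
  edges; so the two blocks together are charged at least two edges. Since distinct paths have distinct first blocks, this gives one extra edge per
  path.\<close>

definition run_starts :: "nat \<Rightarrow> nat set \<Rightarrow> nat set" where
  "run_starts M g = {m \<in> g. (m + M - 1) mod M \<notin> g}"

lemma succ_mod_eq:
  assumes "v < (N::nat)"
  shows "(v + 1) mod N = (if v + 1 < N then v + 1 else 0)"
proof (cases "v + 1 < N")
  case False
  then have "v + 1 = N" using assms by simp
  then show ?thesis by simp
qed simp

lemma pred_mod_eq:
  assumes "u < (N::nat)"
  shows "(u + N - 1) mod N = (if u = 0 then N - 1 else u - 1)"
proof (cases "u = 0")
  case False
  then have "u + N - 1 = (u - 1) + N" by simp
  then have "(u + N - 1) mod N = (u - 1) mod N" by simp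
  then show ?thesis using False assms by simp
qed (use assms in simp)

lemma succ_pred_mod:
  assumes "m < (M::nat)"
  shows "((m + M - 1) mod M + 1) mod M = m"
  using assms pred_mod_eq[OF assms] by (cases "m = 0") auto

lemma inj_on_pred_mod: "inj_on (\<lambda>m. (m + M - 1) mod M) {..<M::nat}"
  by (rule inj_onI) (metis lessThan_iff succ_pred_mod)

lemma bij_betw_succ_mod: "bij_betw (\<lambda>m. (m + 1) mod M) {..<M::nat} {..<M}"
proof -
  have inj: "inj_on (\<lambda>m. (m + 1) mod M) {..<M}"
  proof (rule inj_onI)
    fix x y assume "x \<in> {..<M}" "y \<in> {..<M}" "(x + 1) mod M = (y + 1) mod M"
    then show "x = y" using succ_mod_eq[of x M] succ_mod_eq[of y M] by (auto split: if_splits)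
  qed
  have "(\<lambda>m. (m + 1) mod M) ` {..<M} \<subseteq> {..<M}" by auto
  with inj show ?thesis
    unfolding bij_betw_def using endo_inj_surj[of "{..<M}"] by simp
qed

lemma mem_syndrome_Suc_iff:
  assumes f: "f \<subseteq> edges (Suc j)" and u: "u < 2 ^ Suc j"
  shows "u \<in> syndrome (Suc j) f \<longleftrightarrow> (u \<in> f) \<noteq> ((u + 2 ^ Suc j - 1) mod 2 ^ Suc j \<in> f)"
proof -
  define N :: nat where "N = 2 ^ Suc j"
  define p where "p = (u + N - 1) mod N"
  have N2: "N \<ge> 2" unfolding N_def by simp
  have p: "p = (if u = 0 then N - 1 else u - 1)"
    unfolding p_def using pred_mod_eq u N_def by simp
  have "incident (Suc j) u v \<longleftrightarrow> v = u \<or> v = p" if "v < N" for v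
    unfolding incident_def N_def[symmetric] succ_mod_eq[OF that] p
    using u that N2 N_def by (cases "v + 1 < N"; cases "u = 0") auto
  moreover have "v < N" if "v \<in> f" for v using f that unfolding N_def edges_def by auto
  ultimately have incident_edges: "{v \<in> f. incident (Suc j) u v} = f \<inter> {u, p}" by blast
  have "u \<noteq> p" using p N2 by auto
  then have "card {v \<in> f. incident (Suc j) u v} = of_bool (u \<in> f) + of_bool (p \<in> f)"
    unfolding incident_edges by (cases "u \<in> f"; cases "p \<in> f") (auto simp: Int_insert_right)
  then have "odd (card {v \<in> f. incident (Suc j) u v}) \<longleftrightarrow> (u \<in> f) \<noteq> (p \<in> f)"
    by (cases "u \<in> f"; cases "p \<in> f") simp_all
  moreover have "u \<in> vertices (Suc j)" using u unfolding vertices_def by simp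
  ultimately show ?thesis unfolding syndrome_def p_def N_def by blast
qed

lemma mod_double_succ: "(2 * m + 2) mod (2 * M) = 2 * ((m + 1) mod M)" for m M :: nat
  by (metis add.commute mult_2 mult_Suc_right add_2_eq_Suc' mod_mult_mult1 Suc_eq_plus1)

lemma mem_stageA_blocks_iff:
  assumes f: "f \<subseteq> edges (Suc j)" and m: "m < 2 ^ j"
  shows "m \<in> stageA_blocks j f \<longleftrightarrow>
    (2 * m + 1 \<in> f) \<noteq> (2 * m \<in> f) \<and> (2 * ((m + 1) mod 2 ^ j) \<in> f) \<noteq> (2 * m + 1 \<in> f)"
proof -
  define N :: nat where "N = 2 ^ Suc j"
  have N: "N = 2 * 2 ^ j" unfolding N_def by simp
  have "(2 * m + 1 + N - 1) mod N = 2 * m" using m N by simp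
  then have left: "2 * m + 1 \<in> syndrome (Suc j) f \<longleftrightarrow> (2 * m + 1 \<in> f) \<noteq> (2 * m \<in> f)"
    using mem_syndrome_Suc_iff[OF f, of "2 * m + 1"] m N N_def by simp
  have "((2 * m + 2) mod N + N - 1) mod N = 2 * m + 1"
  proof (cases "2 * m + 2 < N")
    case True
    then have "(2 * m + 2) mod N + N - 1 = (2 * m + 1) + N" by simp
    moreover have "((2 * m + 1) + N) mod N = 2 * m + 1" using True by (simp only: mod_add_self2) simp
    ultimately show ?thesis by simp
  next
    case False
    then have "2 * m + 2 = N" using m N by simp
    then show ?thesis by simp
  qed
  moreover have "(2 * m + 2) mod N < N" using N by simp
  ultimately have right: "(2 * m + 2) mod N \<in> syndrome (Suc j) f \<longleftrightarrow>
      (2 * ((m + 1) mod 2 ^ j) \<in> f) \<noteq> (2 * m + 1 \<in> f)"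
    using mem_syndrome_Suc_iff[OF f, of "(2 * m + 2) mod N"] mod_double_succ N N_def by simp
  show ?thesis using left right m unfolding stageA_blocks_def N_def by auto
qed

lemma odd_mem_syndrome_after_A_iff:
  "2 * m + 1 \<in> syndrome_after_A j f \<longleftrightarrow>
    2 * m + 1 \<in> syndrome (Suc j) f \<and> m \<notin> stageA_blocks j f"
proof -
  have "2 * m + 1 \<noteq> (2 * m' + 2) mod 2 ^ Suc j" for m'
    using mod_double_succ[of m' "2 ^ j"] by (metis power_Suc even_mult_iff dvd_triv_left even_plus_one_iff)
  then show ?thesis unfolding syndrome_after_A_def by auto
qed

lemma mem_reduced_pattern_iff:
  "x \<in> reduced_pattern j f \<longleftrightarrow>
    ((x \<in> f) \<noteq> (x \<in> {2 * m + 1 |m. m \<in> stageA_blocks j f}))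
      \<noteq> (x \<in> {2 * m |m. m < 2 ^ j \<and> 2 * m + 1 \<in> syndrome_after_A j f})"
  by (auto simp: reduced_pattern_def pattern_after_A_def Let_def)

lemma mem_image_pattern_iff:
  assumes f: "f \<subseteq> edges (Suc j)" and m: "m < 2 ^ j"
  shows "m \<in> image_pattern j f \<longleftrightarrow>
    2 \<le> of_bool (2 * m \<in> f) + of_bool (2 * m + 1 \<in> f)
      + (of_bool (2 * ((m + 1) mod 2 ^ j) \<in> f) :: nat)"
proof -
  have left: "2 * m \<in> reduced_pattern j f \<longleftrightarrow> (2 * m \<in> f) \<noteq> (2 * m + 1 \<in> syndrome_after_A j f)"
    unfolding mem_reduced_pattern_iff using m by auto presburger+
  have right: "2 * m + 1 \<in> reduced_pattern j f \<longleftrightarrow> (2 * m + 1 \<in> f) \<noteq> (m \<in> stageA_blocks j f)"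
    unfolding mem_reduced_pattern_iff by auto presburger+
  have "2 * m + 1 \<in> syndrome (Suc j) f \<longleftrightarrow> (2 * m + 1 \<in> f) \<noteq> (2 * m \<in> f)"
    using mem_syndrome_Suc_iff[OF f, of "2 * m + 1"] m by simp
  then show ?thesis
    unfolding image_pattern_def
    using left right odd_mem_syndrome_after_A_iff mem_stageA_blocks_iff[OF f m] m
    by (cases "2 * m \<in> f"; cases "2 * m + 1 \<in> f"; cases "2 * ((m + 1) mod 2 ^ j) \<in> f") auto
qed

lemma card_eq_sum_blocks:
  fixes M :: nat
  assumes f: "f \<subseteq> {..<2 * M}"
  shows "card f = (\<Sum>m<M. of_bool (2 * m + 1 \<in> f) + of_bool (2 * ((m + 1) mod M) \<in> f))"
proof -
  have "card f = (\<Sum>k<2 * M. of_bool (k \<in> f))"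
    using f by (simp add: Int_absorb1 flip: Int_def)
  also have "\<dots> = (\<Sum>m<M. of_bool (2 * m \<in> f) + of_bool (2 * m + 1 \<in> f))"
  proof (induction M)
    case (Suc M)
    have "{..<2 * Suc M} = insert (2 * M + 1) (insert (2 * M) {..<2 * M})" by auto
    then show ?case using Suc by simp
  qed simp
  also have "(\<Sum>m<M. (of_bool (2 * m \<in> f) :: nat)) = (\<Sum>m<M. of_bool (2 * ((m + 1) mod M) \<in> f))"
    by (rule sum.reindex_bij_betw[OF bij_betw_succ_mod, symmetric])
  ultimately show ?thesis by (simp add: sum.distrib)
qed

lemma card_ge_card_add_card_run_starts:
  assumes f: "f \<subseteq> {..<2 * M}" and g: "g \<subseteq> {..<M}"
    and majority: "\<And>m. m < M \<Longrightarrow> m \<in> g \<longleftrightarrow>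
      2 \<le> of_bool (2 * m \<in> f) + of_bool (2 * m + 1 \<in> f) + (of_bool (2 * ((m + 1) mod M) \<in> f) :: nat)"
  shows "card f \<ge> card g + card (run_starts M g)"
proof -
  define S where "S = run_starts M g"
  define p where "p m = (m + M - 1) mod M" for m
  define \<psi> :: "nat \<Rightarrow> nat" where
    "\<psi> m = of_bool (2 * m + 1 \<in> f) + of_bool (2 * ((m + 1) mod M) \<in> f)" for m
  have S: "S \<subseteq> g" unfolding S_def run_starts_def by auto
  have fin: "finite g" "finite S"
    using finite_subset[OF g] finite_subset[OF S] by auto
  have "p ` S \<subseteq> {..<M} - g"
    using S g unfolding S_def run_starts_def p_def by auto
  then have "(\<Sum>m\<in>g. \<psi> m) + (\<Sum>m\<in>p ` S. \<psi> m) \<le> (\<Sum>m<M. \<psi> m)"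
    using g by (simp add: sum.subset_diff[OF g] sum_mono2)
  moreover have "(\<Sum>m\<in>p ` S. \<psi> m) = (\<Sum>m\<in>S. \<psi> (p m))"
    using inj_on_subset[OF inj_on_pred_mod] S g unfolding p_def by (simp add: sum.reindex)
  moreover have "card (g - S) \<le> (\<Sum>m\<in>g - S. \<psi> m)"
  proof -
    have "1 \<le> \<psi> m" if "m \<in> g" for m
      using that g majority[of m] unfolding \<psi>_def
      by (cases "2 * m \<in> f"; cases "2 * m + 1 \<in> f"; cases "2 * ((m + 1) mod M) \<in> f") auto
    then have "(\<Sum>m\<in>g - S. 1) \<le> (\<Sum>m\<in>g - S. \<psi> m)" by (intro sum_mono) auto
    then show ?thesis by simp
  qed
  moreover have "2 * card S \<le> (\<Sum>m\<in>S. \<psi> m + \<psi> (p m))"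
  proof -
    have "2 \<le> \<psi> m + \<psi> (p m)" if "m \<in> S" for m
    proof -
      have m: "m < M" "m \<in> g" using that S g by auto
      then have "of_bool (2 * m \<in> f) \<le> \<psi> (p m)"
        unfolding \<psi>_def p_def succ_pred_mod[OF m(1)] by simp
      then show ?thesis using majority[OF m(1)] m(2) unfolding \<psi>_def
        by (cases "2 * m \<in> f"; cases "2 * m + 1 \<in> f"; cases "2 * ((m + 1) mod M) \<in> f") auto
    qed
    then have "(\<Sum>m\<in>S. 2) \<le> (\<Sum>m\<in>S. \<psi> m + \<psi> (p m))" by (rule sum_mono)
    then show ?thesis by simp
  qed
  moreover have "(\<Sum>m\<in>g. \<psi> m) = (\<Sum>m\<in>g - S. \<psi> m) + (\<Sum>m\<in>S. \<psi> m)"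
    using sum.subset_diff[OF S fin(1)] by simp
  moreover have "card g = card (g - S) + card S"
    using card_Diff_subset[OF fin(2) S] card_mono[OF fin(1) S] by simp
  moreover have "card f = (\<Sum>m<M. \<psi> m)"
    unfolding \<psi>_def by (rule card_eq_sum_blocks[OF f])
  ultimately show ?thesis unfolding S_def by (simp add: sum.distrib)
qed

lemma run_start_unique:
  fixes M s l x :: nat
  assumes "s < M" and R: "R = {(s + k) mod M |k. k < l}" and "R \<subseteq> g"
    and x: "x \<in> R" and "(x + M - 1) mod M \<notin> g"
  shows "x = s"
proof -
  obtain k where k: "k < l" "x = (s + k) mod M" using x R by auto
  show ?thesis
  proof (cases k)
    case 0
    then show ?thesis using k \<open>s < M\<close> by simp
  next
    case (Suc k')
    have "(x + M - 1) mod M = ((s + k) mod M + (M - 1)) mod M" using k \<open>s < M\<close> by simp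
    also have "\<dots> = (s + k + (M - 1)) mod M" by (simp add: mod_add_left_eq)
    also have "s + k + (M - 1) = (s + k') + M" using Suc \<open>s < M\<close> by simp
    finally have "(x + M - 1) mod M \<in> R" using R Suc k by auto
    then show ?thesis using assms by auto
  qed
qed

lemma num_paths_le_card_run_starts:
  assumes g: "g \<subseteq> {..<2 ^ i}"
  shows "num_paths i g \<le> card (run_starts (2 ^ i) g)"
  unfolding num_paths_def
proof (rule card_le_if_inj_on_rel[where r = "\<lambda>R s. s \<in> R"])
  show "finite (run_starts (2 ^ i) g)"
    using g by (auto intro: finite_subset simp: run_starts_def)
next
  fix R assume "R \<in> maximal_runs i g"
  then obtain s l where "s < 2 ^ i" "1 \<le> l" "R = {(s + k) mod 2 ^ i |k. k < l}" "R \<subseteq> g"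
      "(s + 2 ^ i - 1) mod 2 ^ i \<notin> g"
    unfolding maximal_runs_def by blast
  moreover from this have "s \<in> R" by (auto intro!: exI[of _ 0])
  ultimately show "\<exists>s. s \<in> run_starts (2 ^ i) g \<and> s \<in> R" unfolding run_starts_def by blast
next
  fix R1 R2 s
  assume R1: "R1 \<in> maximal_runs i g" and R2: "R2 \<in> maximal_runs i g"
    and s: "s \<in> run_starts (2 ^ i) g" "s \<in> R1" "s \<in> R2"
  obtain s1 l1 where R1: "s1 < 2 ^ i" "R1 = {(s1 + k) mod 2 ^ i |k. k < l1}" "R1 \<subseteq> g"
      "(s1 + l1) mod 2 ^ i \<notin> g"
    using R1 unfolding maximal_runs_def by blast
  obtain s2 l2 where R2: "s2 < 2 ^ i" "R2 = {(s2 + k) mod 2 ^ i |k. k < l2}" "R2 \<subseteq> g"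
      "(s2 + l2) mod 2 ^ i \<notin> g"
    using R2 unfolding maximal_runs_def by blast
  have "s1 = s" "s2 = s"
    using run_start_unique[OF R1(1-3) s(2)] run_start_unique[OF R2(1-3) s(3)] s(1)
    unfolding run_starts_def by auto
  moreover have "l1 = l2"
  proof (rule ccontr)
    assume "l1 \<noteq> l2"
    then have "(s + l1) mod 2 ^ i \<in> R2 \<or> (s + l2) mod 2 ^ i \<in> R1"
      using R1(2) R2(2) \<open>s1 = s\<close> \<open>s2 = s\<close> by (auto simp: neq_iff)
    then show False using R1 R2 \<open>s1 = s\<close> \<open>s2 = s\<close> by auto
  qed
  ultimately show "R1 = R2" using R1(2) R2(2) by simp
qed

theorem lemma1:
  fixes i :: nat and e_i e_i1 :: "nat set"
  assumes "e_i \<subseteq> edges i"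
    and "is_preimage i e_i1 e_i"
  shows "wt e_i1 \<ge> wt e_i + num_paths i e_i"
proof -
  have f: "e_i1 \<subseteq> edges (Suc i)" and img: "image_pattern i e_i1 = e_i"
    using assms(2) unfolding is_preimage_def by auto
  have g: "e_i \<subseteq> {..<2 ^ i}" using assms(1) unfolding edges_def by auto
  have "e_i1 \<subseteq> {..<2 * 2 ^ i}" using f unfolding edges_def by auto
  then have "card e_i + card (run_starts (2 ^ i) e_i) \<le> card e_i1"
    by (rule card_ge_card_add_card_run_starts[OF _ g])
      (use mem_image_pattern_iff[OF f] img in auto)
  then show ?thesis using num_paths_le_card_run_starts[OF g] unfolding wt_def by linarith
qed

end
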